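(* Let $n,d\ge1$ and let $X$ be a lazy simple random walk on $\mathbb{Z}_n^d$ started at $X_0=0$. Let $f:\{1,2,\dots\}\to\mathbb{Z}_n^d$ be any function and let $a=(\lfloor n/2\rfloor,\dots,\lfloor n/2\rfloor)\in\mathbb{Z}_n^d$. Then for all $t\ge1$, \[ \mathbb{P}_0\big(X_1\neq f(1),\dots,X_t\neq f(t)\big)\le \mathbb{P}_0\big(X_1\neq a,\dots,X_t\neq a\big). \]
   Context: $\mathbb{Z}_n=\{0,1,\dots,n-1\}$ with addition mod $n$. The lazy simple random walk on $\mathbb{Z}_n^d$ is the Markov chain which at each step stays put with probability $1/2$ and otherwise moves from $x$ to $x\pm e_i$ ($i=1,\dots,d$, $e_i$ the standard unit vectors), each of these $2d$ moves having probability $1/(4d)$. *)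

theory Defs
  imports Complex_Main
begin

text \<open>Points of Z_n^d are represented as functions nat => nat that take values
  in {0..<n} on coordinates i < d and vanish on coordinates i >= d.\<close>

definition torus :: "nat \<Rightarrow> nat \<Rightarrow> (nat \<Rightarrow> nat) set" where
  "torus n d = {x. (\<forall>i<d. x i < n) \<and> (\<forall>i. d \<le> i \<longrightarrow> x i = 0)}"

definition origin :: "nat \<Rightarrow> nat" where
  "origin = (\<lambda>j. 0)"

definition move :: "nat \<Rightarrow> (nat \<Rightarrow> nat) \<Rightarrow> nat \<Rightarrow> int \<Rightarrow> (nat \<Rightarrow> nat)" where
  "move n x i s = (\<lambda>j. if j = i then nat ((int (x j) + s) mod int n) else x j)"

text \<open>Transition probability of the lazy simple random walk: stay with
  probability 1/2, each of the 2d moves x +- e_i with probability 1/(4d)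
  (coinciding moves add up).\<close>
definition lazy_P :: "nat \<Rightarrow> nat \<Rightarrow> (nat \<Rightarrow> nat) \<Rightarrow> (nat \<Rightarrow> nat) \<Rightarrow> real" where
  "lazy_P n d x y = (if y = x then 1/2 else 0)
     + (\<Sum>i<d. (of_bool (y = move n x i 1) + of_bool (y = move n x i (-1))) / (4 * real d))"

text \<open>avoid_mass n d g t y = P_0(X_1 \<noteq> g 1, ..., X_t \<noteq> g t, X_t = y).\<close>
fun avoid_mass :: "nat \<Rightarrow> nat \<Rightarrow> (nat \<Rightarrow> (nat \<Rightarrow> nat)) \<Rightarrow> nat \<Rightarrow> (nat \<Rightarrow> nat) \<Rightarrow> real" where
  "avoid_mass n d g 0 y = (if y = origin then 1 else 0)"
| "avoid_mass n d g (Suc s) y =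
     (if y = g (Suc s) then 0
      else (\<Sum>x\<in>torus n d. avoid_mass n d g s x * lazy_P n d x y))"

definition avoid_prob :: "nat \<Rightarrow> nat \<Rightarrow> (nat \<Rightarrow> (nat \<Rightarrow> nat)) \<Rightarrow> nat \<Rightarrow> real" where
  "avoid_prob n d g t = (\<Sum>y\<in>torus n d. avoid_mass n d g t y)"

definition antipode :: "nat \<Rightarrow> nat \<Rightarrow> (nat \<Rightarrow> nat)" where
  "antipode n d = (\<lambda>j. if j < d then n div 2 else 0)"

end

theory Submission
  imports Defs "HOL-Library.FuncSet" "HOL-Computational_Algebra.Formal_Power_Series"
begin

unbundle fps_syntax

text \<open>Write \<open>p\<^sup>k(x, y)\<close> for the \<open>k\<close>-step kernel and \<open>F\<^sub>g(r)\<close> for the probability that the walk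
  first meets the moving target \<open>g\<close> at time \<open>r\<close>. Decomposing at the first hit gives
  \<open>p\<^sup>s(0, g s) = \<Sum>\<^sub>r F\<^sub>g(r) p\<^sup>s\<^sup>-\<^sup>r(g r, g s)\<close>. By induction on \<open>k\<close>, \<open>p\<^sup>k(x, y)\<close> is a nonincreasing
  function of the coordinatewise cyclic distances between \<open>x\<close> and \<open>y\<close>, so \<open>p\<^sup>k(x, y) \<le> p\<^sup>k(0, 0)\<close>
  and \<open>p\<^sup>s(0, a) \<le> p\<^sup>s(0, y)\<close>. With the return probabilities \<open>p(k) = p\<^sup>k(0, 0)\<close> this yields
  \<open>(F\<^sub>a * p)(s) = p\<^sup>s(0, a) \<le> p\<^sup>s(0, f s) \<le> (F\<^sub>f * p)(s)\<close> for every \<open>s\<close>.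
  As generating functions \<open>p = 1 + F\<^sub>0 p\<close>, so \<open>p (1 - F\<^sub>0) = 1\<close>, and the partial sums of
  \<open>F\<^sub>f - F\<^sub>a\<close> are the convolution of \<open>(F\<^sub>f - F\<^sub>a) p\<close> with the nonnegative tails \<open>1 - \<Sum>\<^sub>r\<^sub>\<le>\<^sub>m F\<^sub>0(r)\<close>.
  Hence \<open>\<Sum>\<^sub>r\<^sub>\<le>\<^sub>t F\<^sub>a(r) \<le> \<Sum>\<^sub>r\<^sub>\<le>\<^sub>t F\<^sub>f(r)\<close>, and the avoidance probability is \<open>1 - \<Sum>\<^sub>r\<^sub>\<le>\<^sub>t F\<^sub>g(r)\<close>.\<close>

definition cyc_succ :: "nat \<Rightarrow> nat \<Rightarrow> nat" where
  "cyc_succ n v = (if Suc v = n then 0 else Suc v)"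

definition cyc_pred :: "nat \<Rightarrow> nat \<Rightarrow> nat" where
  "cyc_pred n v = (if v = 0 then n - 1 else v - 1)"

lemma mod_succ_eq_cyc_succ:
  assumes "v < n"
  shows "nat ((int v + 1) mod int n) = cyc_succ n v"
proof (cases "Suc v = n")
  case True
  then have "int v + 1 = int n" by simp
  then have "(int v + 1) mod int n = 0" by simp
  then show ?thesis using True by (simp add: cyc_succ_def)
next
  case False
  with assms have "(int v + 1) mod int n = int v + 1"
    by simp
  then show ?thesis using False by (simp add: cyc_succ_def)
qed

lemma mod_pred_eq_cyc_pred:
  assumes "v < n"
  shows "nat ((int v + - 1) mod int n) = cyc_pred n v"
proof (cases "v = 0")
  case True
  with assms have "(-1::int) mod int n = int n - 1"
    using zmod_minus1[of "int n"] by simp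
  then show ?thesis using True assms by (simp add: cyc_pred_def nat_diff_distrib)
next
  case False
  with assms have "(int v - 1) mod int n = int v - 1"
    by simp
  then show ?thesis using False by (simp add: cyc_pred_def nat_diff_distrib)
qed

lemma cyc_succ_lt: "v < n \<Longrightarrow> cyc_succ n v < n"
  by (auto simp: cyc_succ_def)

lemma cyc_pred_lt: "v < n \<Longrightarrow> cyc_pred n v < n"
  by (auto simp: cyc_pred_def)

lemma cyc_pred_succ: "v < n \<Longrightarrow> cyc_pred n (cyc_succ n v) = v"
  by (auto simp: cyc_succ_def cyc_pred_def)

lemma cyc_succ_pred: "v < n \<Longrightarrow> cyc_succ n (cyc_pred n v) = v"
  by (auto simp: cyc_succ_def cyc_pred_def)

lemma move_succ_eq:
  "x \<in> torus n d \<Longrightarrow> i < d \<Longrightarrow> move n x i 1 = x(i := cyc_succ n (x i))"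
  by (auto simp: move_def torus_def fun_eq_iff mod_succ_eq_cyc_succ)

lemma move_pred_eq:
  "x \<in> torus n d \<Longrightarrow> i < d \<Longrightarrow> move n x i (-1) = x(i := cyc_pred n (x i))"
  using mod_pred_eq_cyc_pred by (auto simp: move_def torus_def fun_eq_iff)

lemma fun_upd_in_torus:
  "x \<in> torus n d \<Longrightarrow> i < d \<Longrightarrow> v < n \<Longrightarrow> x(i := v) \<in> torus n d"
  by (auto simp: torus_def)

lemma move_succ_in_torus: "x \<in> torus n d \<Longrightarrow> i < d \<Longrightarrow> move n x i 1 \<in> torus n d"
  by (simp add: move_succ_eq fun_upd_in_torus cyc_succ_lt torus_def)

lemma move_pred_in_torus: "x \<in> torus n d \<Longrightarrow> i < d \<Longrightarrow> move n x i (-1) \<in> torus n d"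
  by (simp add: move_pred_eq fun_upd_in_torus cyc_pred_lt torus_def)

lemma move_succ_eq_iff:
  assumes x: "x \<in> torus n d" and y: "y \<in> torus n d" and i: "i < d"
  shows "y = move n x i 1 \<longleftrightarrow> x = move n y i (-1)"
proof -
  have "x i < n" "y i < n" using x y i by (auto simp: torus_def)
  then show ?thesis
    unfolding move_succ_eq[OF x i] move_pred_eq[OF y i]
    by (auto simp: fun_eq_iff cyc_pred_succ cyc_succ_pred)
qed

lemma finite_torus: "finite (torus n d)"
proof -
  let ?ext = "\<lambda>f i. if i < d then f i else 0"
  have "torus n d \<subseteq> ?ext ` (PiE {..<d} (\<lambda>_. {..<n}))"
  proof
    fix x assume x: "x \<in> torus n d"
    have "restrict x {..<d} \<in> PiE {..<d} (\<lambda>_. {..<n})"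
      using x by (auto simp: torus_def restrict_PiE_iff)
    moreover have "x = ?ext (restrict x {..<d})"
      using x by (auto simp: torus_def fun_eq_iff)
    ultimately show "x \<in> ?ext ` (PiE {..<d} (\<lambda>_. {..<n}))" by blast
  qed
  then show ?thesis
    by (rule finite_subset) (intro finite_imageI finite_PiE; simp)
qed

lemma origin_in_torus: "n \<ge> 1 \<Longrightarrow> origin \<in> torus n d"
  by (auto simp: origin_def torus_def)

lemma antipode_in_torus: "n \<ge> 1 \<Longrightarrow> antipode n d \<in> torus n d"
  by (auto simp: antipode_def torus_def)

lemma sum_torus_mult_of_bool:
  "c \<in> torus n d \<Longrightarrow> (\<Sum>y\<in>torus n d. h y * of_bool (y = c)) = (h c :: real)"
  using finite_torus by (simp add: if_distrib cong: if_cong)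

lemma sum_mult_lazy_P:
  assumes x: "x \<in> torus n d"
  shows "(\<Sum>y\<in>torus n d. h y * lazy_P n d x y) =
     h x / 2 + (\<Sum>i<d. h (move n x i 1) + h (move n x i (-1))) / (4 * real d)"
proof -
  let ?at = "\<lambda>c y. h y * of_bool (y = c)"
  have "(\<Sum>y\<in>torus n d. h y * lazy_P n d x y) =
     (\<Sum>y\<in>torus n d. ?at x y / 2 +
       (\<Sum>i<d. (?at (move n x i 1) y + ?at (move n x i (-1)) y) / (4 * real d)))"
    unfolding lazy_P_def by (intro sum.cong) (simp_all add: algebra_simps sum_distrib_left)
  also have "\<dots> = (\<Sum>y\<in>torus n d. ?at x y) / 2 +
     (\<Sum>i<d. (\<Sum>y\<in>torus n d. ?at (move n x i 1) y) + (\<Sum>y\<in>torus n d. ?at (move n x i (-1)) y))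
       / (4 * real d)"
    by (simp add: sum.distrib sum_divide_distrib[symmetric] sum.swap[of _ "torus n d" "{..<d}"])
  also have "\<dots> = h x / 2 + (\<Sum>i<d. h (move n x i 1) + h (move n x i (-1))) / (4 * real d)"
    using x by (simp add: sum_torus_mult_of_bool move_succ_in_torus move_pred_in_torus)
  finally show ?thesis .
qed

lemma lazy_P_nonneg: "lazy_P n d x y \<ge> 0"
  unfolding lazy_P_def by (intro add_nonneg_nonneg sum_nonneg divide_nonneg_nonneg) auto

lemma sum_lazy_P: "d \<ge> 1 \<Longrightarrow> x \<in> torus n d \<Longrightarrow> (\<Sum>y\<in>torus n d. lazy_P n d x y) = 1"
  using sum_mult_lazy_P[of x n d "\<lambda>_. 1"] by simp

lemma lazy_P_sym:
  assumes x: "x \<in> torus n d" and y: "y \<in> torus n d"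
  shows "lazy_P n d x y = lazy_P n d y x"
proof -
  have "(y = move n x i 1) = (x = move n y i (-1))" "(y = move n x i (-1)) = (x = move n y i 1)"
    if "i < d" for i
    using move_succ_eq_iff[OF x y that] move_succ_eq_iff[OF y x that] by auto
  then show ?thesis
    unfolding lazy_P_def by (auto simp: add.commute intro!: sum.cong)
qed

section \<open>First hitting decomposition\<close>

fun lazy_P_pow :: "nat \<Rightarrow> nat \<Rightarrow> nat \<Rightarrow> (nat \<Rightarrow> nat) \<Rightarrow> (nat \<Rightarrow> nat) \<Rightarrow> real" where
  "lazy_P_pow n d 0 x y = (if y = x then 1 else 0)"
| "lazy_P_pow n d (Suc k) x y = (\<Sum>z\<in>torus n d. lazy_P_pow n d k x z * lazy_P n d z y)"

text \<open>\<open>first_hit_prob n d g r\<close> is \<open>P\<^sub>0(X\<^sub>1 \<noteq> g 1, \<dots>, X\<^sub>r\<^sub>-\<^sub>1 \<noteq> g (r - 1), X\<^sub>r = g r)\<close>;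
  time \<open>0\<close> does not count as a hit.\<close>
fun first_hit_prob :: "nat \<Rightarrow> nat \<Rightarrow> (nat \<Rightarrow> (nat \<Rightarrow> nat)) \<Rightarrow> nat \<Rightarrow> real" where
  "first_hit_prob n d g 0 = 0"
| "first_hit_prob n d g (Suc r) = (\<Sum>x\<in>torus n d. avoid_mass n d g r x * lazy_P n d x (g (Suc r)))"

lemma avoid_mass_nonneg: "avoid_mass n d g s y \<ge> 0"
  by (induction s arbitrary: y) (auto intro!: sum_nonneg mult_nonneg_nonneg lazy_P_nonneg)

lemma avoid_prob_nonneg: "avoid_prob n d g s \<ge> 0"
  unfolding avoid_prob_def by (intro sum_nonneg avoid_mass_nonneg)

lemma first_hit_prob_nonneg: "first_hit_prob n d g r \<ge> 0"
  by (cases r) (auto intro!: sum_nonneg mult_nonneg_nonneg lazy_P_nonneg avoid_mass_nonneg)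

lemma lazy_P_pow_first_hit_decomp:
  "lazy_P_pow n d s origin y =
     avoid_mass n d g s y + (\<Sum>r=0..s. first_hit_prob n d g r * lazy_P_pow n d (s - r) (g r) y)"
proof (induction s arbitrary: y)
  case 0
  then show ?case by simp
next
  case (Suc s)
  let ?step = "\<lambda>h. \<Sum>z\<in>torus n d. h z * lazy_P n d z y"
  have "lazy_P_pow n d (Suc s) origin y =
      ?step (avoid_mass n d g s) +
      (\<Sum>r=0..s. first_hit_prob n d g r * ?step (lazy_P_pow n d (s - r) (g r)))"
    by (simp add: Suc.IH distrib_right sum.distrib sum_distrib_left sum_distrib_right mult.assoc
        flip: sum.swap[of _ "torus n d" "{0..s}"])
  also have "(\<Sum>r=0..s. first_hit_prob n d g r * ?step (lazy_P_pow n d (s - r) (g r)))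
     = (\<Sum>r=0..s. first_hit_prob n d g r * lazy_P_pow n d (Suc s - r) (g r) y)"
    by (rule sum.cong) (auto simp: Suc_diff_le)
  also have "?step (avoid_mass n d g s) =
      avoid_mass n d g (Suc s) y + first_hit_prob n d g (Suc s) * lazy_P_pow n d 0 (g (Suc s)) y"
    by simp
  finally show ?case by simp
qed

lemma lazy_P_pow_at_target:
  assumes "s \<ge> 1"
  shows "lazy_P_pow n d s origin (g s) =
    (\<Sum>r=0..s. first_hit_prob n d g r * lazy_P_pow n d (s - r) (g r) (g s))"
proof -
  obtain s' where "s = Suc s'" using assms by (cases s) auto
  then show ?thesis using lazy_P_pow_first_hit_decomp[of n d s "g s" g] by simp
qed

lemma avoid_prob_eq:
  assumes d: "d \<ge> 1" and n: "n \<ge> 1" and g: "\<forall>s\<ge>1. g s \<in> torus n d"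
  shows "avoid_prob n d g s = 1 - (\<Sum>r\<le>s. first_hit_prob n d g r)"
proof (induction s)
  case 0
  then show ?case
    using origin_in_torus[OF n] finite_torus by (simp add: avoid_prob_def)
next
  case (Suc s)
  let ?S = "\<lambda>y. \<Sum>z\<in>torus n d. avoid_mass n d g s z * lazy_P n d z y"
  have target: "g (Suc s) \<in> torus n d" using g by simp
  have "avoid_prob n d g (Suc s) = (\<Sum>y\<in>torus n d. ?S y - ?S y * of_bool (y = g (Suc s)))"
    unfolding avoid_prob_def by (rule sum.cong) auto
  also have "\<dots> = (\<Sum>y\<in>torus n d. ?S y) - first_hit_prob n d g (Suc s)"
    by (simp only: sum_subtractf sum_torus_mult_of_bool[OF target] first_hit_prob.simps)
  also have "(\<Sum>y\<in>torus n d. ?S y) = (\<Sum>z\<in>torus n d. avoid_mass n d g s z * (\<Sum>y\<in>torus n d. lazy_P n d z y))"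
    unfolding sum_distrib_left by (rule sum.swap)
  also have "\<dots> = avoid_prob n d g s"
    by (simp add: sum_lazy_P[OF d] avoid_prob_def)
  finally show ?case using Suc.IH by simp
qed

section \<open>The kernel as a function of cyclic distances\<close>

definition cyc_dist :: "nat \<Rightarrow> nat \<Rightarrow> nat \<Rightarrow> nat" where
  "cyc_dist n u v = min (if u \<le> v then v - u else u - v) (n - (if u \<le> v then v - u else u - v))"

text \<open>The two cyclic distances reachable from distance \<open>e\<close> by one step of one endpoint.\<close>
definition dist_up :: "nat \<Rightarrow> nat \<Rightarrow> nat" where
  "dist_up n e = min (Suc e) (n - Suc e)"

definition dist_down :: "nat \<Rightarrow> nat \<Rightarrow> nat" where
  "dist_down n e = (if e = 0 then min 1 (n - 1) else e - 1)"

lemma min_dist_succ_pred: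
  fixes a :: nat
  assumes "0 < a" "a < n"
  shows "min (a + 1) (n - (a + 1)) = dist_up n (min a (n - a)) \<and>
           min (a - 1) (n - (a - 1)) = dist_down n (min a (n - a)) \<or>
         min (a + 1) (n - (a + 1)) = dist_down n (min a (n - a)) \<and>
           min (a - 1) (n - (a - 1)) = dist_up n (min a (n - a))"
  using assms unfolding dist_up_def dist_down_def min_def by auto

lemma min_diff_flip: "b \<le> n \<Longrightarrow> min (n - b) (n - (n - b)) = min b (n - (b::nat))"
  by (simp add: min.commute)

lemma cyc_dist_succ_pred:
  assumes u: "u < n" and v: "v < n"
  shows "cyc_dist n u (cyc_succ n v) = dist_up n (cyc_dist n u v) \<and>
           cyc_dist n u (cyc_pred n v) = dist_down n (cyc_dist n u v) \<or>
         cyc_dist n u (cyc_succ n v) = dist_down n (cyc_dist n u v) \<and>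
           cyc_dist n u (cyc_pred n v) = dist_up n (cyc_dist n u v)"
proof -
  consider (eq) "u = v" | (lt) "u < v" | (gt) "v < u" by linarith
  then show ?thesis
  proof cases
    case eq
    with v have "cyc_dist n u (cyc_succ n v) = min 1 (n - 1)" "cyc_dist n u (cyc_pred n v) = min 1 (n - 1)"
      unfolding cyc_dist_def cyc_succ_def cyc_pred_def by auto
    moreover have "cyc_dist n u v = 0" using eq by (simp add: cyc_dist_def)
    ultimately show ?thesis by (simp add: dist_up_def dist_down_def)
  next
    case lt
    define a where "a = v - u"
    have a: "0 < a" "a < n" using lt v by (auto simp: a_def)
    have succ: "cyc_dist n u (cyc_succ n v) = min (a + 1) (n - (a + 1))"
      using lt min_diff_flip[of "a + 1" n] a
      by (cases "Suc v = n") (simp_all add: cyc_dist_def cyc_succ_def a_def Suc_diff_le)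
    have "cyc_dist n u (cyc_pred n v) = min (a - 1) (n - (a - 1))"
      using lt by (simp add: cyc_dist_def cyc_pred_def a_def)
    moreover have "cyc_dist n u v = min a (n - a)" using lt by (simp add: cyc_dist_def a_def)
    ultimately show ?thesis using min_dist_succ_pred[OF a] succ by simp
  next
    case gt
    define a where "a = u - v"
    have a: "0 < a" "a < n" using gt u by (auto simp: a_def)
    have "cyc_dist n u (cyc_succ n v) = min (a - 1) (n - (a - 1))"
      using gt u by (simp add: cyc_dist_def cyc_succ_def a_def)
    moreover have "cyc_dist n u (cyc_pred n v) = min (a + 1) (n - (a + 1))"
      using gt u min_diff_flip[of "a + 1" n] a
      by (cases "v = 0") (auto simp: cyc_dist_def cyc_pred_def a_def Suc_diff_le)
    moreover have "cyc_dist n u v = min a (n - a)" using gt by (simp add: cyc_dist_def a_def)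
    ultimately show ?thesis using min_dist_succ_pred[OF a] by auto
  qed
qed

lemma cyc_dist_eq_0_iff: "u < n \<Longrightarrow> v < n \<Longrightarrow> cyc_dist n u v = 0 \<longleftrightarrow> u = v"
  unfolding cyc_dist_def min_def by (auto split: if_splits)

lemma cyc_dist_le_half: "cyc_dist n u v \<le> n div 2"
  unfolding cyc_dist_def min_def by (auto split: if_splits)

definition cyc_dist_vec :: "nat \<Rightarrow> nat \<Rightarrow> (nat \<Rightarrow> nat) \<Rightarrow> (nat \<Rightarrow> nat) \<Rightarrow> (nat \<Rightarrow> nat)" where
  "cyc_dist_vec n d x y = (\<lambda>i. if i < d then cyc_dist n (x i) (y i) else 0)"

definition dist_box :: "nat \<Rightarrow> nat \<Rightarrow> (nat \<Rightarrow> nat) set" where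
  "dist_box n d = {D. (\<forall>i<d. D i \<le> n div 2) \<and> (\<forall>i. d \<le> i \<longrightarrow> D i = 0)}"

lemma cyc_dist_vec_in_dist_box: "cyc_dist_vec n d x y \<in> dist_box n d"
  by (simp add: dist_box_def cyc_dist_vec_def cyc_dist_le_half)

definition coord_moves :: "nat \<Rightarrow> ((nat \<Rightarrow> nat) \<Rightarrow> real) \<Rightarrow> (nat \<Rightarrow> nat) \<Rightarrow> nat \<Rightarrow> real" where
  "coord_moves n \<phi> D i = \<phi> (D(i := dist_up n (D i))) + \<phi> (D(i := dist_down n (D i)))"

definition dist_avg :: "nat \<Rightarrow> nat \<Rightarrow> ((nat \<Rightarrow> nat) \<Rightarrow> real) \<Rightarrow> (nat \<Rightarrow> nat) \<Rightarrow> real" where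
  "dist_avg n d \<phi> D = \<phi> D / 2 + (\<Sum>i<d. coord_moves n \<phi> D i) / (4 * real d)"

fun dist_kernel :: "nat \<Rightarrow> nat \<Rightarrow> nat \<Rightarrow> (nat \<Rightarrow> nat) \<Rightarrow> real" where
  "dist_kernel n d 0 D = of_bool (\<forall>i<d. D i = 0)"
| "dist_kernel n d (Suc k) D = dist_avg n d (dist_kernel n d k) D"

lemma lazy_P_pow_eq_dist_kernel:
  assumes x: "x \<in> torus n d" and y: "y \<in> torus n d"
  shows "lazy_P_pow n d k x y = dist_kernel n d k (cyc_dist_vec n d x y)"
  using y
proof (induction k arbitrary: y)
  case 0
  have "(y = x) = (\<forall>i<d. cyc_dist n (x i) (y i) = 0)"
    using x 0 cyc_dist_eq_0_iff by (auto simp: torus_def fun_eq_iff) (metis not_le)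
  then show ?case by (simp add: cyc_dist_vec_def)
next
  case (Suc k)
  let ?D = "cyc_dist_vec n d x y"
  have "lazy_P_pow n d (Suc k) x y = (\<Sum>z\<in>torus n d. lazy_P_pow n d k x z * lazy_P n d y z)"
    using lazy_P_sym[OF _ Suc.prems] by (simp cong: sum.cong)
  also have "\<dots> = lazy_P_pow n d k x y / 2 +
      (\<Sum>i<d. lazy_P_pow n d k x (move n y i 1) + lazy_P_pow n d k x (move n y i (-1))) / (4 * real d)"
    by (rule sum_mult_lazy_P[OF Suc.prems])
  also have "(\<Sum>i<d. lazy_P_pow n d k x (move n y i 1) + lazy_P_pow n d k x (move n y i (-1)))
     = (\<Sum>i<d. coord_moves n (dist_kernel n d k) ?D i)"
  proof (rule sum.cong)
    fix i assume "i \<in> {..<d}"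
    then have i: "i < d" by simp
    have "x i < n" "y i < n" using x Suc.prems i by (auto simp: torus_def)
    moreover have "cyc_dist_vec n d x (move n y i 1) = ?D(i := cyc_dist n (x i) (cyc_succ n (y i)))"
      "cyc_dist_vec n d x (move n y i (-1)) = ?D(i := cyc_dist n (x i) (cyc_pred n (y i)))"
      using i by (auto simp: cyc_dist_vec_def move_succ_eq[OF Suc.prems i] move_pred_eq[OF Suc.prems i])
    moreover have "?D i = cyc_dist n (x i) (y i)" using i by (simp add: cyc_dist_vec_def)
    ultimately show "lazy_P_pow n d k x (move n y i 1) + lazy_P_pow n d k x (move n y i (-1))
        = coord_moves n (dist_kernel n d k) ?D i"
      unfolding Suc.IH[OF move_succ_in_torus[OF Suc.prems i]] Suc.IH[OF move_pred_in_torus[OF Suc.prems i]]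
        coord_moves_def
      using cyc_dist_succ_pred[of "x i" n "y i"] by auto
  qed simp
  finally show ?case using Suc.IH[OF Suc.prems] by (simp add: dist_avg_def)
qed

section \<open>Monotonicity in the distances\<close>

definition dist_antitone :: "nat \<Rightarrow> nat \<Rightarrow> ((nat \<Rightarrow> nat) \<Rightarrow> real) \<Rightarrow> bool" where
  "dist_antitone n d \<phi> \<longleftrightarrow>
     (\<forall>D\<in>dist_box n d. \<forall>i<d. Suc (D i) \<le> n div 2 \<longrightarrow> \<phi> (D(i := Suc (D i))) \<le> \<phi> D)"

lemma dist_antitoneD:
  "dist_antitone n d \<phi> \<Longrightarrow> D \<in> dist_box n d \<Longrightarrow> i < d \<Longrightarrow> Suc (D i) \<le> n div 2 \<Longrightarrow>
     \<phi> (D(i := Suc (D i))) \<le> \<phi> D"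
  unfolding dist_antitone_def by blast

lemma fun_upd_in_dist_box:
  "D \<in> dist_box n d \<Longrightarrow> i < d \<Longrightarrow> e \<le> n div 2 \<Longrightarrow> D(i := e) \<in> dist_box n d"
  unfolding dist_box_def by auto

lemma dist_up_le_half: "e \<le> n div 2 \<Longrightarrow> dist_up n e \<le> n div 2"
  unfolding dist_up_def by auto

lemma dist_down_le_half: "e \<le> n div 2 \<Longrightarrow> dist_down n e \<le> n div 2"
  unfolding dist_down_def by auto

lemma dist_antitone_fun_upd:
  assumes \<phi>: "dist_antitone n d \<phi>" and D: "D \<in> dist_box n d" and i: "i < d"
    and "e \<le> e'" and "e' \<le> n div 2"
  shows "\<phi> (D(i := e')) \<le> \<phi> (D(i := e))"
  using assms(4,5)
proof (induction e' rule: dec_induct)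
  case base
  then show ?case by simp
next
  case (step m)
  have "D(i := m) \<in> dist_box n d" using fun_upd_in_dist_box[OF D i] step.prems by simp
  then have "\<phi> (D(i := Suc m)) \<le> \<phi> (D(i := m))"
    using dist_antitoneD[OF \<phi> _ i] step.prems by fastforce
  also have "\<dots> \<le> \<phi> (D(i := e))" using step.prems by (intro step.IH) simp
  finally show ?case .
qed

lemma coord_moves_other_le:
  assumes \<phi>: "dist_antitone n d \<phi>" and D: "D \<in> dist_box n d" and i: "i < d"
    and up: "Suc (D i) \<le> n div 2" and j: "j < d" "j \<noteq> i"
  shows "coord_moves n \<phi> (D(i := Suc (D i))) j \<le> coord_moves n \<phi> D j"
proof -
  have "\<phi> ((D(i := Suc (D i)))(j := v)) \<le> \<phi> (D(j := v))" if v: "v \<le> n div 2" for v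
  proof -
    have "(D(i := Suc (D i)))(j := v) = (D(j := v))(i := Suc ((D(j := v)) i))"
      using j by (auto simp: fun_eq_iff)
    then show ?thesis
      using dist_antitoneD[OF \<phi> fun_upd_in_dist_box[OF D j(1) v] i] up j by simp
  qed
  moreover have "D j \<le> n div 2" using D j by (simp add: dist_box_def)
  ultimately show ?thesis
    using j by (simp add: coord_moves_def add_mono dist_up_le_half dist_down_le_half)
qed

text \<open>\<open>dist_down n e \<le> dist_up n (Suc e)\<close> except for \<open>n = 2\<close>, where the two moves merely swap
  \<open>D\<close> and \<open>D(i := 1)\<close>.\<close>
lemma coord_moves_same_le:
  assumes \<phi>: "dist_antitone n d \<phi>" and D: "D \<in> dist_box n d" and i: "i < d"
    and up: "Suc (D i) \<le> n div 2"
  shows "coord_moves n \<phi> (D(i := Suc (D i))) i \<le>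
    coord_moves n \<phi> D i + 2 * (\<phi> D - \<phi> (D(i := Suc (D i))))"
proof -
  define e where "e = D i"
  define D' where "D' = D(i := Suc e)"
  have loss: "\<phi> D' \<le> \<phi> D"
    using dist_antitoneD[OF \<phi> D i up] by (simp add: D'_def e_def)
  have DDe: "D(i := e) = D" by (simp add: e_def)
  have "coord_moves n \<phi> D' i = \<phi> (D(i := dist_up n (Suc e))) + \<phi> D"
    using DDe by (simp add: coord_moves_def D'_def dist_down_def)
  moreover have "coord_moves n \<phi> D i = \<phi> D' + \<phi> (D(i := dist_down n e))"
    using up by (auto simp: coord_moves_def D'_def e_def dist_up_def)
  moreover have "\<phi> (D(i := dist_up n (Suc e))) \<le> \<phi> (D(i := dist_down n e)) + (\<phi> D - \<phi> D')"
  proof (cases "dist_down n e \<le> dist_up n (Suc e)")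
    case True
    have "dist_up n (Suc e) \<le> n div 2" using up by (simp add: dist_up_le_half e_def)
    then show ?thesis
      using dist_antitone_fun_upd[OF \<phi> D i True] loss by simp
  next
    case False
    then have "n = 2" "e = 0" using up unfolding dist_down_def dist_up_def e_def by (auto split: if_splits)
    then show ?thesis using DDe by (simp add: dist_up_def dist_down_def D'_def)
  qed
  ultimately show ?thesis by (simp add: D'_def e_def)
qed

lemma dist_antitone_dist_avg:
  assumes \<phi>: "dist_antitone n d \<phi>"
  shows "dist_antitone n d (dist_avg n d \<phi>)"
  unfolding dist_antitone_def
proof (intro ballI allI impI)
  fix D i assume D: "D \<in> dist_box n d" and i: "i < d" and up: "Suc (D i) \<le> n div 2"
  define D' where "D' = D(i := Suc (D i))"
  define X where "X = \<phi> D - \<phi> D'"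
  have X: "X \<ge> 0" using dist_antitoneD[OF \<phi> D i up] by (simp add: X_def D'_def)
  have "(\<Sum>j<d. coord_moves n \<phi> D' j) \<le> (\<Sum>j<d. coord_moves n \<phi> D j + (if j = i then 2 * X else 0))"
    using coord_moves_other_le[OF \<phi> D i up] coord_moves_same_le[OF \<phi> D i up]
    by (intro sum_mono) (auto simp: D'_def X_def)
  also have "\<dots> = (\<Sum>j<d. coord_moves n \<phi> D j) + 2 * X"
    using i by (simp add: sum.distrib)
  finally have sums: "(\<Sum>j<d. coord_moves n \<phi> D' j) \<le> (\<Sum>j<d. coord_moves n \<phi> D j) + 2 * X" .
  have d: "real d \<ge> 1" using i by simp
  have "(\<Sum>j<d. coord_moves n \<phi> D' j) / (4 * real d) \<le>
      ((\<Sum>j<d. coord_moves n \<phi> D j) + 2 * X) / (4 * real d)"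
    using sums by (simp add: divide_right_mono)
  also have "\<dots> = (\<Sum>j<d. coord_moves n \<phi> D j) / (4 * real d) + 2 * X / (4 * real d)"
    by (rule add_divide_distrib)
  also have "2 * X / (4 * real d) \<le> 2 * X / 4"
    using X d by (intro divide_left_mono) auto
  finally have "(\<Sum>j<d. coord_moves n \<phi> D' j) / (4 * real d) \<le>
      (\<Sum>j<d. coord_moves n \<phi> D j) / (4 * real d) + X / 2"
    by simp
  then show "dist_avg n d \<phi> (D(i := Suc (D i))) \<le> dist_avg n d \<phi> D"
    unfolding dist_avg_def D'_def[symmetric] X_def diff_divide_distrib by linarith
qed

lemma dist_antitone_dist_kernel: "dist_antitone n d (dist_kernel n d k)"
proof (induction k)
  case 0
  show ?case by (auto simp: dist_antitone_def)
next
  case (Suc k)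
  then show ?case using dist_antitone_dist_avg by simp
qed

lemma dist_antitone_le:
  assumes \<phi>: "dist_antitone n d \<phi>" and D: "D \<in> dist_box n d" and D': "D' \<in> dist_box n d"
    and le: "\<And>i. D i \<le> D' i"
  shows "\<phi> D' \<le> \<phi> D"
proof -
  define E where "E = (\<lambda>j i. if i < j then D i else D' i)"
  have E_box: "E j \<in> dist_box n d" for j
    using D D' by (auto simp: dist_box_def E_def)
  have "\<phi> D' \<le> \<phi> (E j)" for j
  proof (induction j)
    case 0
    then show ?case by (simp add: E_def)
  next
    case (Suc j)
    show ?case
    proof (cases "j < d")
      case True
      have "E j = (E j)(j := D' j)" "E (Suc j) = (E j)(j := D j)"
        by (auto simp: E_def fun_eq_iff)
      moreover have "D' j \<le> n div 2" using D' True by (simp add: dist_box_def)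
      ultimately have "\<phi> (E j) \<le> \<phi> (E (Suc j))"
        using dist_antitone_fun_upd[OF \<phi> E_box True le] by metis
      then show ?thesis using Suc.IH by linarith
    next
      case False
      then have "E (Suc j) = E j" using D D' by (auto simp: E_def dist_box_def fun_eq_iff)
      then show ?thesis using Suc.IH by simp
    qed
  qed
  moreover have "E d = D" using D D' by (auto simp: E_def dist_box_def fun_eq_iff)
  ultimately show ?thesis by metis
qed

lemma lazy_P_pow_le_diag:
  assumes x: "x \<in> torus n d" and y: "y \<in> torus n d" and z: "z \<in> torus n d"
  shows "lazy_P_pow n d k x y \<le> lazy_P_pow n d k z z"
proof -
  have "cyc_dist_vec n d z z = (\<lambda>_. 0)" by (auto simp: cyc_dist_vec_def cyc_dist_def fun_eq_iff)
  moreover have "dist_kernel n d k (cyc_dist_vec n d x y) \<le> dist_kernel n d k (\<lambda>_. 0)"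
    by (rule dist_antitone_le[OF dist_antitone_dist_kernel _ cyc_dist_vec_in_dist_box])
      (auto simp: dist_box_def)
  ultimately show ?thesis using lazy_P_pow_eq_dist_kernel x y z by metis
qed

lemma lazy_P_pow_antipode_le:
  assumes n: "n \<ge> 1" and y: "y \<in> torus n d"
  shows "lazy_P_pow n d k origin (antipode n d) \<le> lazy_P_pow n d k origin y"
proof -
  have "cyc_dist n 0 (n div 2) = n div 2" by (auto simp: cyc_dist_def)
  then have "dist_kernel n d k (cyc_dist_vec n d origin (antipode n d)) \<le>
      dist_kernel n d k (cyc_dist_vec n d origin y)"
    by (intro dist_antitone_le[OF dist_antitone_dist_kernel] cyc_dist_vec_in_dist_box)
      (auto simp: cyc_dist_vec_def origin_def antipode_def cyc_dist_le_half)
  then show ?thesis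
    using lazy_P_pow_eq_dist_kernel[OF origin_in_torus[OF n]] y antipode_in_torus[OF n] by simp
qed

section \<open>Renewal argument\<close>

lemma fps_times_ones_nth:
  fixes A :: "'a::comm_semiring_1 fps"
  shows "(A * Abs_fps (\<lambda>_. 1)) $ m = (\<Sum>r\<le>m. A $ r)"
  by (simp add: fps_mult_nth atLeast0AtMost)

lemma renewal_partial_sums_nonneg:
  fixes P F H :: "real fps"
  assumes renewal: "P = 1 + F * P"
    and F_sums_le: "\<And>m. (\<Sum>r\<le>m. F $ r) \<le> 1"
    and HP_nonneg: "\<And>s. (H * P) $ s \<ge> 0"
  shows "(\<Sum>r\<le>t. H $ r) \<ge> 0"
proof -
  define S :: "real fps" where "S = Abs_fps (\<lambda>_. 1)"
  have inverse: "P * (1 - F) = 1"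
    using renewal by (simp add: algebra_simps)
  have tails: "((1 - F) * S) $ m = 1 - (\<Sum>r\<le>m. F $ r)" for m
    unfolding S_def fps_times_ones_nth by (simp add: sum_subtractf)
  have "(\<Sum>r\<le>t. H $ r) = (H * S) $ t"
    by (simp add: S_def fps_times_ones_nth)
  also have "\<dots> = ((H * P) * ((1 - F) * S)) $ t"
    using inverse by (metis mult.assoc mult_1_left)
  also have "\<dots> = (\<Sum>i=0..t. (H * P) $ i * (1 - (\<Sum>r\<le>t - i. F $ r)))"
    by (simp only: fps_mult_nth[of "H * P"] tails)
  also have "\<dots> \<ge> 0"
    using HP_nonneg F_sums_le by (intro sum_nonneg mult_nonneg_nonneg) auto
  finally show ?thesis .
qed

definition return_gf :: "nat \<Rightarrow> nat \<Rightarrow> real fps" where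
  "return_gf n d = Abs_fps (\<lambda>k. lazy_P_pow n d k origin origin)"

definition first_hit_gf :: "nat \<Rightarrow> nat \<Rightarrow> (nat \<Rightarrow> (nat \<Rightarrow> nat)) \<Rightarrow> real fps" where
  "first_hit_gf n d g = Abs_fps (first_hit_prob n d g)"

lemma first_hit_gf_mult_return_gf_nth:
  "(first_hit_gf n d g * return_gf n d) $ s =
     (\<Sum>r=0..s. first_hit_prob n d g r * lazy_P_pow n d (s - r) origin origin)"
  by (simp add: fps_mult_nth first_hit_gf_def return_gf_def)

lemma lazy_P_pow_le_first_hit_gf:
  assumes n: "n \<ge> 1" and g: "\<forall>s\<ge>1. g s \<in> torus n d" and s: "s \<ge> 1"
  shows "lazy_P_pow n d s origin (g s) \<le> (first_hit_gf n d g * return_gf n d) $ s"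
  unfolding lazy_P_pow_at_target[OF s] first_hit_gf_mult_return_gf_nth
proof (rule sum_mono)
  fix r assume r: "r \<in> {0..s}"
  show "first_hit_prob n d g r * lazy_P_pow n d (s - r) (g r) (g s) \<le>
      first_hit_prob n d g r * lazy_P_pow n d (s - r) origin origin"
  proof (cases r)
    case (Suc r')
    then show ?thesis
      using g s r origin_in_torus[OF n]
      by (intro mult_left_mono lazy_P_pow_le_diag first_hit_prob_nonneg) auto
  qed simp
qed

lemma first_hit_gf_const_mult_return_gf_nth:
  assumes n: "n \<ge> 1" and c: "c \<in> torus n d" and s: "s \<ge> 1"
  shows "(first_hit_gf n d (\<lambda>_. c) * return_gf n d) $ s = lazy_P_pow n d s origin c"
proof -
  have "lazy_P_pow n d k c c = lazy_P_pow n d k origin origin" for k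
    using lazy_P_pow_le_diag[OF c c origin_in_torus[OF n]]
      lazy_P_pow_le_diag[OF origin_in_torus[OF n] origin_in_torus[OF n] c] by (rule order_antisym)
  then show ?thesis
    using lazy_P_pow_at_target[OF s, of n d "\<lambda>_. c"] by (simp add: first_hit_gf_mult_return_gf_nth)
qed

lemma return_gf_renewal:
  assumes n: "n \<ge> 1"
  shows "return_gf n d = 1 + first_hit_gf n d (\<lambda>_. origin) * return_gf n d"
proof (rule fps_ext)
  fix s
  show "return_gf n d $ s = (1 + first_hit_gf n d (\<lambda>_. origin) * return_gf n d) $ s"
  proof (cases "s = 0")
    case True
    then show ?thesis by (simp add: return_gf_def first_hit_gf_def)
  next
    case False
    then show ?thesis
      using first_hit_gf_const_mult_return_gf_nth[OF n origin_in_torus[OF n], of s]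
      by (simp add: return_gf_def)
  qed
qed

theorem theorem1p2:
  fixes n d t :: nat and f :: "nat \<Rightarrow> (nat \<Rightarrow> nat)"
  assumes "n \<ge> 1" and "d \<ge> 1" and "t \<ge> 1"
    and "\<forall>s\<ge>1. f s \<in> torus n d"
  shows "avoid_prob n d f t \<le> avoid_prob n d (\<lambda>s. antipode n d) t"
proof -
  note n = assms(1) and d = assms(2) and f = assms(4)
  let ?a = "\<lambda>s. antipode n d" and ?o = "\<lambda>s. origin"
  have a: "\<forall>s\<ge>1. ?a s \<in> torus n d" and o: "\<forall>s\<ge>1. ?o s \<in> torus n d"
    using antipode_in_torus[OF n] origin_in_torus[OF n] by auto
  have "(\<Sum>r\<le>t. (first_hit_gf n d f - first_hit_gf n d ?a) $ r) \<ge> 0"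
  proof (rule renewal_partial_sums_nonneg[OF return_gf_renewal[OF n]])
    show "(\<Sum>r\<le>m. first_hit_gf n d ?o $ r) \<le> 1" for m
      using avoid_prob_eq[OF d n o, of m] avoid_prob_nonneg[of n d ?o m]
      by (simp add: first_hit_gf_def)
    show "((first_hit_gf n d f - first_hit_gf n d ?a) * return_gf n d) $ s \<ge> 0" for s
    proof (cases "s = 0")
      case False
      then have "(first_hit_gf n d ?a * return_gf n d) $ s \<le> lazy_P_pow n d s origin (f s)"
        using first_hit_gf_const_mult_return_gf_nth[OF n antipode_in_torus[OF n]]
          lazy_P_pow_antipode_le[OF n] f by simp
      also have "\<dots> \<le> (first_hit_gf n d f * return_gf n d) $ s"
        using lazy_P_pow_le_first_hit_gf[OF n f] False by simp
      finally show ?thesis by (simp add: left_diff_distrib)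
    qed (simp add: first_hit_gf_def)
  qed
  then show ?thesis
    using avoid_prob_eq[OF d n f] avoid_prob_eq[OF d n a] by (simp add: first_hit_gf_def sum_subtractf)
qed

end
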